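(* Let $w,c\ge 0$ and let $(W_1,\ldots,W_n)$ be a $w$-colourable grading of a graph $G$ with $\chi(G)>w+2c$. Then there exist subsets $X,Y$ of $V(G)$ such that: $G[X]$ and $G[Y]$ are both connected; every vertex in $Y$ is earlier than every vertex in $X$; some vertex in $X$ has a neighbour in $Y$; and $\chi(X)>c$ and $\chi(Y)>c$.
   Context: Graphs are finite and simple. For $X\subseteq V(G)$, $G[X]$ is the induced subgraph and $\chi(X)$ means $\chi(G[X])$. A grading of $G$ is a sequence $(W_1,\ldots,W_n)$ of pairwise disjoint subsets of $V(G)$ with union $V(G)$; it is $w$-colourable if $\chi(G[W_i])\le w$ for $1\le i\le n$. A vertex $u$ is earlier than a vertex $v$ (with respect to the grading) if $u\in W_i$ and $v\in W_j$ with $i<j$. *)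

theory Defs
  imports Main
begin

definition simple_graph :: "'a set \<Rightarrow> ('a \<Rightarrow> 'a \<Rightarrow> bool) \<Rightarrow> bool" where
  "simple_graph V E \<longleftrightarrow> finite V \<and> (\<forall>u v. E u v \<longrightarrow> u \<in> V \<and> v \<in> V)
     \<and> (\<forall>u v. E u v \<longrightarrow> E v u) \<and> (\<forall>v. \<not> E v v)"

definition proper_colouring :: "('a \<Rightarrow> 'a \<Rightarrow> bool) \<Rightarrow> 'a set \<Rightarrow> nat \<Rightarrow> ('a \<Rightarrow> nat) \<Rightarrow> bool" where
  "proper_colouring E X k f \<longleftrightarrow> (\<forall>v\<in>X. f v < k) \<and> (\<forall>u\<in>X. \<forall>v\<in>X. E u v \<longrightarrow> f u \<noteq> f v)"

definition chi :: "('a \<Rightarrow> 'a \<Rightarrow> bool) \<Rightarrow> 'a set \<Rightarrow> nat" where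
  "chi E X = (LEAST k. \<exists>f. proper_colouring E X k f)"

definition walk_in :: "('a \<Rightarrow> 'a \<Rightarrow> bool) \<Rightarrow> 'a set \<Rightarrow> 'a list \<Rightarrow> bool" where
  "walk_in E X p \<longleftrightarrow> p \<noteq> [] \<and> set p \<subseteq> X \<and> (\<forall>i. Suc i < length p \<longrightarrow> E (p ! i) (p ! Suc i))"

definition connected_induced :: "('a \<Rightarrow> 'a \<Rightarrow> bool) \<Rightarrow> 'a set \<Rightarrow> bool" where
  "connected_induced E X \<longleftrightarrow> X \<noteq> {} \<and>
     (\<forall>u\<in>X. \<forall>v\<in>X. \<exists>p. walk_in E X p \<and> hd p = u \<and> last p = v)"

definition grading :: "'a set \<Rightarrow> nat \<Rightarrow> (nat \<Rightarrow> 'a set) \<Rightarrow> bool" where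
  "grading V n W \<longleftrightarrow> (\<forall>i\<in>{1..n}. \<forall>j\<in>{1..n}. i \<noteq> j \<longrightarrow> W i \<inter> W j = {})
     \<and> (\<Union>i\<in>{1..n}. W i) = V"

definition w_colourable_grading :: "('a \<Rightarrow> 'a \<Rightarrow> bool) \<Rightarrow> 'a set \<Rightarrow> nat \<Rightarrow> (nat \<Rightarrow> 'a set) \<Rightarrow> nat \<Rightarrow> bool" where
  "w_colourable_grading E V n W w \<longleftrightarrow> grading V n W \<and> (\<forall>i\<in>{1..n}. chi E (W i) \<le> w)"

definition earlier :: "nat \<Rightarrow> (nat \<Rightarrow> 'a set) \<Rightarrow> 'a \<Rightarrow> 'a \<Rightarrow> bool" where
  "earlier n W u v \<longleftrightarrow> (\<exists>i\<in>{1..n}. \<exists>j\<in>{1..n}. u \<in> W i \<and> v \<in> W j \<and> i < j)"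

end

theory Submission
  imports Defs
begin

text \<open>Suppose there is no such pair. By induction on \<open>U \<subseteq> V\<close> we colour \<open>G[U]\<close> with \<open>w + 2c\<close>
  colours so that every vertex of a level \<open>W\<^sub>i\<close> whose prefix \<open>U \<inter> (W\<^sub>1 \<union> \<dots> \<union> W\<^sub>i)\<close> has only
  connected induced subgraphs of chromatic number at most \<open>c\<close> gets a colour below \<open>c + w\<close>.
  If \<open>U\<close> itself has this property, its components are \<open>c\<close>-coloured. Otherwise let \<open>A\<close> be the
  first prefix without it, \<open>P\<close> the union of the connected subgraphs of \<open>A\<close> with chromatic number
  \<open>> c\<close>, and \<open>N\<close> the union of the connected subgraphs of \<open>U - A\<close> that touch \<open>P\<close>. Since there
  is no pair, every connected subgraph of \<open>N\<close> has chromatic number at most \<open>c\<close>. Colour \<open>P\<close>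
  with \<open>c + w\<close> colours (\<open>c\<close> for the earlier levels, \<open>w\<close> for the last level of \<open>A\<close>), \<open>N\<close> with
  \<open>c\<close> further colours, and \<open>U - (P \<union> N)\<close> recursively: \<open>P\<close> has no neighbours there, and the
  neighbours of \<open>N\<close> there lie in \<open>A - P\<close>, which the invariant colours below \<open>c + w\<close>.\<close>

lemma walk_in_Cons_Cons:
  "walk_in E X (x # y # p) \<longleftrightarrow> x \<in> X \<and> E x y \<and> walk_in E X (y # p)"
  by (auto simp: walk_in_def nth_Cons less_Suc_eq_0_disj split: nat.splits)

lemma walk_in_mono: "walk_in E X p \<Longrightarrow> X \<subseteq> Y \<Longrightarrow> walk_in E Y p"
  unfolding walk_in_def by blast

lemma walk_in_append:
  "walk_in E X p \<Longrightarrow> walk_in E X q \<Longrightarrow> last p = hd q \<Longrightarrow> walk_in E X (p @ tl q)"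
proof (induction p rule: induct_list012)
  case 1 then show ?case by (simp add: walk_in_def)
next
  case (2 x) then show ?case by (cases q) (auto simp: walk_in_def)
next
  case (3 x y p) then show ?case by (simp add: walk_in_Cons_Cons)
qed

lemma connected_induced_nonempty: "connected_induced E X \<Longrightarrow> X \<noteq> {}"
  unfolding connected_induced_def by simp

lemma connected_induced_singleton: "connected_induced E {x}"
  unfolding connected_induced_def by (auto intro!: exI[of _ "[x]"] simp: walk_in_def)

lemma connected_induced_walk:
  assumes "connected_induced E S" "S \<subseteq> T" "u \<in> S" "v \<in> S"
  obtains p where "walk_in E T p" "hd p = u" "last p = v"
  using assms walk_in_mono unfolding connected_induced_def by metis

lemma connected_induced_Un:
  assumes A: "connected_induced E A" and B: "connected_induced E B" and z: "z \<in> A" "z \<in> B"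
  shows "connected_induced E (A \<union> B)"
proof -
  have walk_via_z: "\<exists>p. walk_in E (A \<union> B) p \<and> hd p = x \<and> last p = y"
    if "x \<in> A \<union> B" "y \<in> A \<union> B" "x = z \<or> y = z" for x y
    using that A B z connected_induced_walk[of E A "A \<union> B" x y] connected_induced_walk[of E B "A \<union> B" x y]
    by (metis Un_iff sup_ge1 sup_ge2)
  have "\<exists>p. walk_in E (A \<union> B) p \<and> hd p = u \<and> last p = v" if uv: "u \<in> A \<union> B" "v \<in> A \<union> B" for u v
  proof -
    obtain p q where p: "walk_in E (A \<union> B) p" "hd p = u" "last p = z"
      and q: "walk_in E (A \<union> B) q" "hd q = z" "last q = v"
      using walk_via_z uv z by (metis UnI1)
    have "p \<noteq> []" "q \<noteq> []" using p(1) q(1) by (auto simp: walk_in_def)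
    then have "hd (p @ tl q) = u" "last (p @ tl q) = v"
      using p q by (auto simp: last_append last_tl) (metis last_ConsL list.collapse)
    with walk_in_append[OF p(1) q(1)] p(3) q(2) show ?thesis by auto
  qed
  then show ?thesis using z unfolding connected_induced_def by blast
qed

lemma connected_induced_insert:
  assumes "connected_induced E Z" "z \<in> Z" "E z x" "E x z"
  shows "connected_induced E (insert x Z)"
proof -
  have "connected_induced E {z, x}"
    using assms(3,4) unfolding connected_induced_def
    by (auto intro: exI[of _ "[z]"] exI[of _ "[x]"] exI[of _ "[z, x]"] exI[of _ "[x, z]"]
             simp: walk_in_Cons_Cons walk_in_def)
  moreover have "insert x Z = Z \<union> {z, x}" using assms(2) by auto
  ultimately show ?thesis using connected_induced_Un[OF assms(1) _ assms(2)] by (metis insertI1)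
qed

lemma chi_le_colours: "proper_colouring E S k f \<Longrightarrow> chi E S \<le> k"
  unfolding chi_def by (rule Least_le) blast

lemma proper_colouring_mono:
  "proper_colouring E S k f \<Longrightarrow> T \<subseteq> S \<Longrightarrow> k \<le> k' \<Longrightarrow> proper_colouring E T k' f"
  unfolding proper_colouring_def by (meson less_le_trans subsetD)

lemma proper_colouring_chi:
  assumes "finite S" "\<And>v. \<not> E v v"
  shows "\<exists>f. proper_colouring E S (chi E S) f"
proof -
  obtain h where h: "bij_betw h S {0..<card S}" using ex_bij_betw_finite_nat[OF assms(1)] by blast
  have "proper_colouring E S (card S) h"
    unfolding proper_colouring_def
  proof (intro conjI ballI impI)
    show "h v < card S" if "v \<in> S" for v using h that by (auto dest: bij_betwE)
    show "h u \<noteq> h v" if "u \<in> S" "v \<in> S" "E u v" for u v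
    proof -
      have "u \<noteq> v" using that(3) assms(2) by blast
      then show ?thesis using h that(1,2) unfolding bij_betw_def inj_on_def by blast
    qed
  qed
  then have "\<exists>k f. proper_colouring E S k f" by blast
  then show ?thesis unfolding chi_def by (rule LeastI_ex)
qed

lemma chi_mono:
  assumes "finite S" "\<And>v. \<not> E v v" "T \<subseteq> S"
  shows "chi E T \<le> chi E S"
  using proper_colouring_chi[of S E, OF assms(1,2)] proper_colouring_mono[OF _ assms(3) order_refl]
  by (blast intro: chi_le_colours)

lemma proper_colouring_if_chi_le:
  assumes "finite S" "\<And>v. \<not> E v v" "chi E S \<le> k"
  shows "\<exists>f. proper_colouring E S k f"
  using proper_colouring_chi[of S E, OF assms(1,2)] proper_colouring_mono[OF _ order_refl assms(3)] by blast

lemma proper_colouring_Un: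
  assumes "proper_colouring E A k f" "proper_colouring E B k g"
    and "\<And>u x. u \<in> A \<Longrightarrow> x \<in> B - A \<Longrightarrow> E u x \<or> E x u \<Longrightarrow> f u \<noteq> g x"
  shows "proper_colouring E (A \<union> B) k (\<lambda>v. if v \<in> A then f v else g v)"
  unfolding proper_colouring_def
proof (intro conjI ballI impI)
  fix v assume "v \<in> A \<union> B"
  then show "(if v \<in> A then f v else g v) < k" using assms(1,2) unfolding proper_colouring_def by auto
next
  fix u x assume "u \<in> A \<union> B" "x \<in> A \<union> B" "E u x"
  then show "(if u \<in> A then f u else g u) \<noteq> (if x \<in> A then f x else g x)"
  proof (cases "u \<in> A"; cases "x \<in> A")
    assume "u \<in> A" "x \<notin> A"
    then show ?thesis using assms(3) \<open>x \<in> A \<union> B\<close> \<open>E u x\<close> by auto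
  next
    assume "u \<notin> A" "x \<in> A"
    then show ?thesis using assms(3)[of x u] \<open>u \<in> A \<union> B\<close> \<open>E u x\<close> by auto
  qed (use assms(1,2) \<open>u \<in> A \<union> B\<close> \<open>x \<in> A \<union> B\<close> \<open>E u x\<close> in \<open>auto simp: proper_colouring_def\<close>)
qed

lemma proper_colouring_Un_shift:
  assumes "proper_colouring E A a f" "proper_colouring E B b g"
  shows "proper_colouring E (A \<union> B) (a + b) (\<lambda>v. if v \<in> A then f v else a + g v)"
proof (rule proper_colouring_Un)
  show "proper_colouring E A (a + b) f" using proper_colouring_mono[OF assms(1)] by simp
  show "proper_colouring E B (a + b) (\<lambda>v. a + g v)" using assms(2) unfolding proper_colouring_def by auto
  show "f u \<noteq> a + g x" if "u \<in> A" for u x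
  proof -
    have "f u < a" using assms(1) that unfolding proper_colouring_def by blast
    then show ?thesis by simp
  qed
qed

definition connected_part :: "('a \<Rightarrow> 'a \<Rightarrow> bool) \<Rightarrow> 'a set \<Rightarrow> ('a set \<Rightarrow> bool) \<Rightarrow> 'a set" where
  "connected_part E S \<Phi> = \<Union>{Z. Z \<subseteq> S \<and> connected_induced E Z \<and> \<Phi> Z}"

lemma connected_part_subset: "connected_part E S \<Phi> \<subseteq> S"
  unfolding connected_part_def by blast

lemma connected_partI: "Z \<subseteq> S \<Longrightarrow> connected_induced E Z \<Longrightarrow> \<Phi> Z \<Longrightarrow> Z \<subseteq> connected_part E S \<Phi>"
  unfolding connected_part_def by blast

lemma connected_partE:
  assumes "v \<in> connected_part E S \<Phi>"
  obtains Z where "Z \<subseteq> S" "connected_induced E Z" "\<Phi> Z" "v \<in> Z"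
  using assms unfolding connected_part_def by blast

lemma connected_part_closed:
  assumes sym: "\<And>u v. E u v \<Longrightarrow> E v u"
    and upward: "\<And>Z x. Z \<subseteq> S \<Longrightarrow> x \<in> S \<Longrightarrow> \<Phi> Z \<Longrightarrow> \<Phi> (insert x Z)"
    and "u \<in> connected_part E S \<Phi>" "x \<in> S" "E u x"
  shows "x \<in> connected_part E S \<Phi>"
proof -
  obtain Z where Z: "Z \<subseteq> S" "connected_induced E Z" "\<Phi> Z" "u \<in> Z"
    using assms(3) by (rule connected_partE)
  have "connected_induced E (insert x Z)"
    using connected_induced_insert[OF Z(2,4) assms(5) sym[OF assms(5)]] .
  then show ?thesis using connected_partI[of "insert x Z" S E \<Phi>] Z(1,3) upward assms(4) by blast
qed

lemma connected_part_component_mem: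
  assumes "v \<in> S" shows "v \<in> connected_part E S (\<lambda>Z. v \<in> Z)"
proof -
  have "{v} \<subseteq> connected_part E S (\<lambda>Z. v \<in> Z)"
    by (rule connected_partI) (simp_all add: assms connected_induced_singleton)
  then show ?thesis by simp
qed

lemma connected_part_component_connected:
  assumes "v \<in> S"
  shows "connected_induced E (connected_part E S (\<lambda>Z. v \<in> Z))"
  unfolding connected_induced_def
proof (intro conjI ballI)
  show "connected_part E S (\<lambda>Z. v \<in> Z) \<noteq> {}"
    using connected_part_component_mem[OF assms] by blast
  fix u1 u2 assume "u1 \<in> connected_part E S (\<lambda>Z. v \<in> Z)" "u2 \<in> connected_part E S (\<lambda>Z. v \<in> Z)"
  then obtain Z1 Z2 where Z1: "Z1 \<subseteq> S" "connected_induced E Z1" "v \<in> Z1" "u1 \<in> Z1"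
    and Z2: "Z2 \<subseteq> S" "connected_induced E Z2" "v \<in> Z2" "u2 \<in> Z2"
    by (metis connected_partE)
  have "connected_induced E (Z1 \<union> Z2)" using connected_induced_Un[OF Z1(2) Z2(2) Z1(3) Z2(3)] .
  moreover have "Z1 \<union> Z2 \<subseteq> connected_part E S (\<lambda>Z. v \<in> Z)"
    using connected_partI[of "Z1 \<union> Z2" S E] calculation Z1 Z2 by blast
  ultimately show "\<exists>p. walk_in E (connected_part E S (\<lambda>Z. v \<in> Z)) p \<and> hd p = u1 \<and> last p = u2"
    using Z1(4) Z2(4) by (metis UnCI connected_induced_walk)
qed

definition conn_chi_le :: "('a \<Rightarrow> 'a \<Rightarrow> bool) \<Rightarrow> nat \<Rightarrow> 'a set \<Rightarrow> bool" where
  "conn_chi_le E c S \<longleftrightarrow> (\<forall>Z \<subseteq> S. connected_induced E Z \<longrightarrow> chi E Z \<le> c)"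

lemma conn_chi_le_subset: "conn_chi_le E c S \<Longrightarrow> T \<subseteq> S \<Longrightarrow> conn_chi_le E c T"
  unfolding conn_chi_le_def by blast

lemma conn_chi_le_empty: "conn_chi_le E c {}"
  unfolding conn_chi_le_def using connected_induced_nonempty by blast

lemma proper_colouring_if_conn_chi_le:
  assumes sym: "\<And>u v. E u v \<Longrightarrow> E v u" and irrefl: "\<And>v. \<not> E v v"
  shows "finite S \<Longrightarrow> conn_chi_le E c S \<Longrightarrow> \<exists>f. proper_colouring E S c f"
proof (induction "card S" arbitrary: S rule: less_induct)
  case less
  show ?case
  proof (cases "S = {}")
    case True then show ?thesis unfolding proper_colouring_def by blast
  next
    case False
    then obtain v where v: "v \<in> S" by blast
    define K where "K = connected_part E S (\<lambda>Z. v \<in> Z)"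
    have "K \<subseteq> S" unfolding K_def by (rule connected_part_subset)
    have "connected_induced E K" unfolding K_def using v by (rule connected_part_component_connected)
    then have "chi E K \<le> c" using less.prems(2) \<open>K \<subseteq> S\<close> unfolding conn_chi_le_def by blast
    then obtain g where g: "proper_colouring E K c g"
      using proper_colouring_if_chi_le[of K E c] irrefl finite_subset[OF \<open>K \<subseteq> S\<close> less.prems(1)] by blast
    have "v \<in> K" unfolding K_def using v by (rule connected_part_component_mem)
    then have "S - K \<subset> S" using v by blast
    then have "card (S - K) < card S" using less.prems(1) by (simp add: psubset_card_mono)
    moreover have "finite (S - K)" "conn_chi_le E c (S - K)"
      using less.prems conn_chi_le_subset[of E c S "S - K"] by auto
    ultimately obtain h where h: "proper_colouring E (S - K) c h" using less.hyps by blast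
    have no_edge: "\<not> E u x" if "u \<in> K" "x \<in> S - K" for u x
    proof
      assume "E u x"
      have "x \<in> K" unfolding K_def
        by (rule connected_part_closed[OF sym _ that(1)[unfolded K_def] _ \<open>E u x\<close>]) (use that in auto)
      then show False using that(2) by blast
    qed
    have "proper_colouring E (K \<union> (S - K)) c (\<lambda>u. if u \<in> K then g u else h u)"
    proof (rule proper_colouring_Un[OF g h])
      show "g u \<noteq> h x" if "u \<in> K" "x \<in> S - K - K" "E u x \<or> E x u" for u x
        using no_edge[of u x] sym[of x u] that by blast
    qed
    moreover have "K \<union> (S - K) = S" using \<open>K \<subseteq> S\<close> by blast
    ultimately show ?thesis by auto
  qed
qed

definition levels_upto :: "(nat \<Rightarrow> 'a set) \<Rightarrow> nat \<Rightarrow> 'a set" where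
  "levels_upto W j = (\<Union>i\<in>{1..j}. W i)"

lemma levels_upto_0 [simp]: "levels_upto W 0 = {}"
  unfolding levels_upto_def by simp

lemma levels_upto_Suc: "levels_upto W (Suc j) = levels_upto W j \<union> W (Suc j)"
  unfolding levels_upto_def by (auto simp: atLeastAtMostSuc_conv)

lemma levels_upto_mono: "i \<le> j \<Longrightarrow> levels_upto W i \<subseteq> levels_upto W j"
  unfolding levels_upto_def by (intro UN_mono) auto

definition linked_pair ::
    "('a \<Rightarrow> 'a \<Rightarrow> bool) \<Rightarrow> 'a set \<Rightarrow> nat \<Rightarrow> (nat \<Rightarrow> 'a set) \<Rightarrow> nat \<Rightarrow> 'a set \<Rightarrow> 'a set \<Rightarrow> bool" where
  "linked_pair E V n W c X Y \<longleftrightarrow> X \<subseteq> V \<and> Y \<subseteq> V \<and> connected_induced E X \<and> connected_induced E Y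
     \<and> (\<forall>y\<in>Y. \<forall>x\<in>X. earlier n W y x) \<and> (\<exists>x\<in>X. \<exists>y\<in>Y. E x y) \<and> chi E X > c \<and> chi E Y > c"

context
  fixes V :: "'a set" and E :: "'a \<Rightarrow> 'a \<Rightarrow> bool" and n w c :: nat and W :: "nat \<Rightarrow> 'a set"
  assumes graph: "simple_graph V E"
    and graded: "w_colourable_grading E V n W w"
begin

lemma finite_vertices: "finite V"
  using graph unfolding simple_graph_def by blast

lemma edge_sym: "E u v \<Longrightarrow> E v u"
  using graph unfolding simple_graph_def by blast

lemma edge_irrefl: "\<not> E v v"
  using graph unfolding simple_graph_def by blast

lemma finite_subset_vertices: "S \<subseteq> V \<Longrightarrow> finite S"
  using finite_vertices finite_subset by blast

lemma chi_mono_vertices: "T \<subseteq> S \<Longrightarrow> S \<subseteq> V \<Longrightarrow> chi E T \<le> chi E S"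
  using finite_subset_vertices by (intro chi_mono edge_irrefl)

lemma level_chi_le: "i \<in> {1..n} \<Longrightarrow> chi E (W i) \<le> w"
  using graded unfolding w_colourable_grading_def by blast

lemma levels_upto_n: "levels_upto W n = V"
  using graded unfolding w_colourable_grading_def grading_def levels_upto_def by blast

lemma level_subset: "i \<in> {1..n} \<Longrightarrow> W i \<subseteq> V"
  using levels_upto_n unfolding levels_upto_def by blast

lemma earlier_if_levels_upto:
  assumes "j \<le> n" "y \<in> levels_upto W j" "x \<in> V - levels_upto W j"
  shows "earlier n W y x"
proof -
  obtain i where i: "i \<in> {1..j}" "y \<in> W i" using assms(2) unfolding levels_upto_def by blast
  obtain i' where i': "i' \<in> {1..n}" "x \<in> W i'" using assms(3) levels_upto_n unfolding levels_upto_def by blast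
  have "j < i'" using assms(3) i' unfolding levels_upto_def by (metis DiffD2 UN_I atLeastAtMost_iff not_le)
  then show ?thesis unfolding earlier_def using i i' assms(1) by fastforce
qed

lemma first_unbounded_level:
  assumes "U \<subseteq> V" "\<not> conn_chi_le E c U"
  obtains j where "j < n" "conn_chi_le E c (U \<inter> levels_upto W j)"
    "\<not> conn_chi_le E c (U \<inter> levels_upto W (Suc j))"
proof -
  have "U \<inter> levels_upto W n = U" using assms(1) levels_upto_n by blast
  then have "\<not> conn_chi_le E c (U \<inter> levels_upto W n)" using assms(2) by simp
  moreover have "conn_chi_le E c (U \<inter> levels_upto W 0)" by (simp add: conn_chi_le_empty)
  ultimately show ?thesis
    using ex_least_nat_less[of "\<lambda>j. \<not> conn_chi_le E c (U \<inter> levels_upto W j)"] that by blast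
qed

definition layered_colouring :: "'a set \<Rightarrow> ('a \<Rightarrow> nat) \<Rightarrow> bool" where
  "layered_colouring U f \<longleftrightarrow> proper_colouring E U (w + 2 * c) f
     \<and> (\<forall>i\<in>{1..n}. \<forall>v\<in>U \<inter> W i. conn_chi_le E c (U \<inter> levels_upto W i) \<longrightarrow> f v < c + w)"

context
  assumes no_linked_pair: "\<And>X Y. \<not> linked_pair E V n W c X Y"
begin

context
  fixes U :: "'a set" and j :: nat and A P N :: "'a set"
  assumes U_sub: "U \<subseteq> V" and j_less: "j < n"
    and low_bounded: "conn_chi_le E c (U \<inter> levels_upto W j)"
    and next_unbounded: "\<not> conn_chi_le E c (U \<inter> levels_upto W (Suc j))"
  defines "A \<equiv> U \<inter> levels_upto W (Suc j)"
    and "P \<equiv> connected_part E A (\<lambda>Z. c < chi E Z)"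
    and "N \<equiv> connected_part E (U - A) (\<lambda>Z. \<exists>z\<in>Z. \<exists>p\<in>P. E z p)"
begin

lemma P_subset: "P \<subseteq> A" and N_subset: "N \<subseteq> U - A"
  unfolding P_def N_def by (rule connected_part_subset)+

lemma P_nonempty: "P \<noteq> {}"
proof -
  obtain Z where "Z \<subseteq> A" "connected_induced E Z" "c < chi E Z"
    using next_unbounded unfolding conn_chi_le_def A_def by (auto simp: not_le)
  then have "Z \<subseteq> P" unfolding P_def by (intro connected_partI)
  then show ?thesis using connected_induced_nonempty[OF \<open>connected_induced E Z\<close>] by blast
qed

lemma cross_edge:
  assumes "u \<in> P \<union> N" "x \<in> U - (P \<union> N)" "E u x"
  shows "u \<in> N \<and> x \<in> A - P"
proof (cases "u \<in> P")
  case True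
  have "x \<notin> A"
  proof
    assume "x \<in> A"
    have "x \<in> P" unfolding P_def
    proof (rule connected_part_closed[OF edge_sym _ True[unfolded P_def] \<open>x \<in> A\<close> assms(3)])
      fix Z y assume "Z \<subseteq> A" "y \<in> A" "c < chi E Z"
      have "insert y Z \<subseteq> V" using \<open>Z \<subseteq> A\<close> \<open>y \<in> A\<close> U_sub unfolding A_def by blast
      then have "chi E Z \<le> chi E (insert y Z)" by (intro chi_mono_vertices) auto
      then show "c < chi E (insert y Z)" using \<open>c < chi E Z\<close> by linarith
    qed
    then show False using assms(2) by blast
  qed
  then have "{x} \<subseteq> N" unfolding N_def
    using assms(2) True edge_sym[OF assms(3)] connected_induced_singleton by (intro connected_partI) auto
  then show ?thesis using assms(2) by blast
next
  case False
  then have "u \<in> N" using assms(1) by blast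
  have "x \<notin> U - A"
  proof
    assume "x \<in> U - A"
    have "x \<in> N" unfolding N_def
      by (rule connected_part_closed[OF edge_sym _ \<open>u \<in> N\<close>[unfolded N_def] \<open>x \<in> U - A\<close> assms(3)]) auto
    then show False using assms(2) by blast
  qed
  then show ?thesis using \<open>u \<in> N\<close> assms(2) by blast
qed

lemma conn_chi_le_A_minus_P: "conn_chi_le E c (A - P)"
  unfolding conn_chi_le_def
proof (intro allI impI)
  fix Z assume "Z \<subseteq> A - P" "connected_induced E Z"
  show "chi E Z \<le> c"
  proof (rule ccontr)
    assume "\<not> chi E Z \<le> c"
    then have "Z \<subseteq> P" unfolding P_def using \<open>Z \<subseteq> A - P\<close> \<open>connected_induced E Z\<close>
      by (intro connected_partI) auto
    then show False using \<open>Z \<subseteq> A - P\<close> connected_induced_nonempty[OF \<open>connected_induced E Z\<close>] by blast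
  qed
qed

lemma conn_chi_le_N: "conn_chi_le E c N"
  unfolding conn_chi_le_def
proof (intro allI impI)
  fix Z assume Z: "Z \<subseteq> N" "connected_induced E Z"
  show "chi E Z \<le> c"
  proof (rule ccontr)
    assume big: "\<not> chi E Z \<le> c"
    obtain z0 where "z0 \<in> Z" using connected_induced_nonempty[OF Z(2)] by blast
    then have "z0 \<in> N" using Z(1) by blast
    then obtain Z0 where Z0: "Z0 \<subseteq> U - A" "connected_induced E Z0" "\<exists>z\<in>Z0. \<exists>p\<in>P. E z p" "z0 \<in> Z0"
      unfolding N_def by (rule connected_partE)
    then obtain z p where z: "z \<in> Z0" and p: "p \<in> P" "E z p" by blast
    obtain Y where Y: "Y \<subseteq> A" "connected_induced E Y" "c < chi E Y" "p \<in> Y"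
      using p(1) unfolding P_def by (rule connected_partE)
    define X where "X = Z \<union> Z0"
    have X_sub: "X \<subseteq> U - A" using Z(1) N_subset Z0(1) unfolding X_def by blast
    have "chi E Z \<le> chi E X" using chi_mono_vertices X_sub U_sub unfolding X_def by blast
    have "linked_pair E V n W c X Y"
      unfolding linked_pair_def
    proof (intro conjI)
      show "X \<subseteq> V" "Y \<subseteq> V" using X_sub Y(1) U_sub unfolding A_def by auto
      show "connected_induced E X"
        unfolding X_def using connected_induced_Un[OF Z(2) Z0(2) \<open>z0 \<in> Z\<close> Z0(4)] .
      show "connected_induced E Y" by (rule Y(2))
      show "\<forall>y\<in>Y. \<forall>x\<in>X. earlier n W y x"
      proof (intro ballI)
        fix y x assume "y \<in> Y" "x \<in> X"
        show "earlier n W y x"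
        proof (rule earlier_if_levels_upto)
          show "Suc j \<le> n" using j_less by simp
          show "y \<in> levels_upto W (Suc j)" using \<open>y \<in> Y\<close> Y(1) unfolding A_def by blast
          show "x \<in> V - levels_upto W (Suc j)" using \<open>x \<in> X\<close> X_sub U_sub unfolding A_def by blast
        qed
      qed
      show "\<exists>x\<in>X. \<exists>y\<in>Y. E x y" using z p(2) Y(4) unfolding X_def by blast
      show "c < chi E X" "c < chi E Y" using big \<open>chi E Z \<le> chi E X\<close> Y(3) by auto
    qed
    then show False using no_linked_pair by blast
  qed
qed

lemma colouring_P_N:
  obtains g where "proper_colouring E (P \<union> N) (w + 2 * c) g"
    "\<And>v. v \<in> P \<Longrightarrow> g v < c + w" "\<And>v. v \<in> N \<Longrightarrow> c + w \<le> g v"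
proof -
  have "finite (U \<inter> levels_upto W j)" using U_sub by (intro finite_subset_vertices) blast
  then obtain g1 where g1: "proper_colouring E (U \<inter> levels_upto W j) c g1"
    using proper_colouring_if_conn_chi_le[of E, OF edge_sym edge_irrefl _ low_bounded] by blast
  have "Suc j \<in> {1..n}" using j_less by simp
  then have "finite (W (Suc j))" "chi E (W (Suc j)) \<le> w"
    using level_subset finite_subset_vertices level_chi_le by blast+
  then obtain g2 where g2: "proper_colouring E (W (Suc j)) w g2"
    using proper_colouring_if_chi_le[of "W (Suc j)" E, OF _ edge_irrefl] by blast
  have "P \<subseteq> (U \<inter> levels_upto W j) \<union> W (Suc j)"
    using P_subset unfolding A_def levels_upto_Suc by blast
  then have h: "proper_colouring E P (c + w) (\<lambda>v. if v \<in> U \<inter> levels_upto W j then g1 v else c + g2 v)"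
    using proper_colouring_mono[OF proper_colouring_Un_shift[OF g1 g2]] by blast
  have "finite N" using N_subset U_sub by (intro finite_subset_vertices) blast
  then obtain g3 where g3: "proper_colouring E N c g3"
    using proper_colouring_if_conn_chi_le[of E, OF edge_sym edge_irrefl _ conn_chi_le_N] by blast
  define g where "g v = (if v \<in> P then (if v \<in> U \<inter> levels_upto W j then g1 v else c + g2 v)
                          else (c + w) + g3 v)" for v
  have "proper_colouring E (P \<union> N) (c + w + c) g"
    unfolding g_def by (rule proper_colouring_Un_shift[OF h g3])
  moreover have "c + w + c = w + 2 * c" by simp
  ultimately have "proper_colouring E (P \<union> N) (w + 2 * c) g" by metis
  moreover have "g v < c + w" if "v \<in> P" for v
    using h \<open>v \<in> P\<close> unfolding g_def proper_colouring_def by auto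
  moreover have "c + w \<le> g v" if "v \<in> N" for v
    using \<open>v \<in> N\<close> P_subset N_subset unfolding g_def by auto
  ultimately show ?thesis by (rule that)
qed

lemma mem_A_if_bounded_prefix:
  assumes "i \<in> {1..n}" "v \<in> U \<inter> W i" "conn_chi_le E c (U \<inter> levels_upto W i)"
  shows "v \<in> A"
proof -
  have "i \<le> j"
  proof (rule ccontr)
    assume "\<not> i \<le> j"
    then have "U \<inter> levels_upto W (Suc j) \<subseteq> U \<inter> levels_upto W i"
      using levels_upto_mono[of "Suc j" i W] by auto
    then show False using next_unbounded conn_chi_le_subset[OF assms(3)] by blast
  qed
  have "v \<in> levels_upto W i" using assms(1,2) unfolding levels_upto_def by auto
  moreover have "levels_upto W i \<subseteq> levels_upto W (Suc j)" using \<open>i \<le> j\<close> by (intro levels_upto_mono) simp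
  ultimately show ?thesis using assms(2) unfolding A_def by blast
qed

lemma layered_colouring_step:
  assumes IH: "\<And>U'. U' \<subset> U \<Longrightarrow> \<exists>f. layered_colouring U' f"
  shows "\<exists>f. layered_colouring U f"
proof -
  define R where "R = U - (P \<union> N)"
  have "R \<subset> U" using P_nonempty P_subset unfolding R_def A_def by blast
  then obtain f' where "layered_colouring R f'" using IH by blast
  then have f': "proper_colouring E R (w + 2 * c) f'"
    and f'_low: "\<And>i v. i \<in> {1..n} \<Longrightarrow> v \<in> R \<inter> W i \<Longrightarrow> conn_chi_le E c (R \<inter> levels_upto W i)
                   \<Longrightarrow> f' v < c + w"
    unfolding layered_colouring_def by auto
  obtain g where g: "proper_colouring E (P \<union> N) (w + 2 * c) g"
    and g_P: "\<And>v. v \<in> P \<Longrightarrow> g v < c + w" and g_N: "\<And>v. v \<in> N \<Longrightarrow> c + w \<le> g v"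
    by (rule colouring_P_N) blast
  define f where "f v = (if v \<in> P \<union> N then g v else f' v)" for v
  have f'_A_minus_P: "f' x < c + w" if x: "x \<in> R" "x \<in> A - P" for x
  proof -
    obtain i where i: "i \<in> {1..Suc j}" "x \<in> W i" using x(2) unfolding A_def levels_upto_def by blast
    have "R \<inter> levels_upto W i \<subseteq> A - P"
      using levels_upto_mono[of i "Suc j" W] i(1) unfolding R_def A_def by auto
    then show ?thesis using f'_low[of i x] i j_less x(1) conn_chi_le_subset[OF conn_chi_le_A_minus_P] by auto
  qed
  have "proper_colouring E ((P \<union> N) \<union> R) (w + 2 * c) f"
    unfolding f_def
  proof (rule proper_colouring_Un[OF g f'])
    fix u x assume "u \<in> P \<union> N" "x \<in> R - (P \<union> N)" "E u x \<or> E x u"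
    then have "u \<in> N \<and> x \<in> A - P" using cross_edge edge_sym unfolding R_def by blast
    then show "g u \<noteq> f' x" using g_N f'_A_minus_P \<open>x \<in> R - (P \<union> N)\<close> by fastforce
  qed
  moreover have "(P \<union> N) \<union> R = U" using P_subset N_subset unfolding R_def A_def by blast
  ultimately have proper: "proper_colouring E U (w + 2 * c) f" by simp
  have low: "f v < c + w"
    if i: "i \<in> {1..n}" and v: "v \<in> U \<inter> W i" and bounded: "conn_chi_le E c (U \<inter> levels_upto W i)" for i v
  proof (cases "v \<in> P \<union> N")
    case True
    moreover have "v \<notin> N" using mem_A_if_bounded_prefix[OF i v bounded] N_subset by blast
    ultimately have "v \<in> P" by blast
    then show ?thesis using g_P unfolding f_def by simp
  next
    case False
    then have "v \<in> R \<inter> W i" using v unfolding R_def by blast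
    moreover have "conn_chi_le E c (R \<inter> levels_upto W i)"
      by (rule conn_chi_le_subset[OF bounded]) (auto simp: R_def)
    ultimately have "f' v < c + w" by (rule f'_low[OF i])
    then show ?thesis using False unfolding f_def by simp
  qed
  have "layered_colouring U f" unfolding layered_colouring_def using proper low by blast
  then show ?thesis by blast
qed

end

lemma layered_colouring_exists: "U \<subseteq> V \<Longrightarrow> \<exists>f. layered_colouring U f"
proof (induction "card U" arbitrary: U rule: less_induct)
  case less
  have "finite U" using less.prems by (rule finite_subset_vertices)
  show ?case
  proof (cases "conn_chi_le E c U")
    case True
    then obtain f where f: "proper_colouring E U c f"
      using proper_colouring_if_conn_chi_le[of E, OF edge_sym edge_irrefl \<open>finite U\<close>] by blast
    have "proper_colouring E U (w + 2 * c) f" using proper_colouring_mono[OF f order_refl] by simp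
    moreover have "f v < c + w" if "v \<in> U" for v
    proof -
      have "f v < c" using f \<open>v \<in> U\<close> unfolding proper_colouring_def by blast
      then show ?thesis by simp
    qed
    ultimately have "layered_colouring U f" unfolding layered_colouring_def by blast
    then show ?thesis by blast
  next
    case False
    obtain j where j: "j < n" "conn_chi_le E c (U \<inter> levels_upto W j)"
      "\<not> conn_chi_le E c (U \<inter> levels_upto W (Suc j))"
      by (rule first_unbounded_level[OF less.prems False]) blast
    have "\<exists>f. layered_colouring U' f" if "U' \<subset> U" for U'
    proof -
      have "card U' < card U" using \<open>finite U\<close> that by (rule psubset_card_mono)
      then show ?thesis using less.hyps that less.prems by blast
    qed
    then show ?thesis by (rule layered_colouring_step[OF less.prems j])
  qed
qed

lemma colouring_of_vertices: "\<exists>f. proper_colouring E V (w + 2 * c) f"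
proof -
  obtain f where "layered_colouring V f" using layered_colouring_exists[OF order_refl] by blast
  then show ?thesis unfolding layered_colouring_def by blast
qed

end

end

theorem mainTheorem2:
  fixes V :: "'a set" and E :: "'a \<Rightarrow> 'a \<Rightarrow> bool" and n w c :: nat and W :: "nat \<Rightarrow> 'a set"
  assumes "simple_graph V E"
    and "w_colourable_grading E V n W w"
    and "chi E V > w + 2 * c"
  shows "\<exists>X Y. X \<subseteq> V \<and> Y \<subseteq> V \<and> connected_induced E X \<and> connected_induced E Y
    \<and> (\<forall>y\<in>Y. \<forall>x\<in>X. earlier n W y x)
    \<and> (\<exists>x\<in>X. \<exists>y\<in>Y. E x y)
    \<and> chi E X > c \<and> chi E Y > c"
proof -
  have "\<exists>X Y. linked_pair E V n W c X Y"
  proof (rule ccontr)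
    assume "\<nexists>X Y. linked_pair E V n W c X Y"
    then obtain f where "proper_colouring E V (w + 2 * c) f"
      using colouring_of_vertices[OF assms(1,2)] by blast
    then have "chi E V \<le> w + 2 * c" by (rule chi_le_colours)
    with assms(3) show False by simp
  qed
  then obtain X Y where "linked_pair E V n W c X Y" by blast
  then show ?thesis unfolding linked_pair_def by blast
qed

end
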